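(* Let $(t_1,s_1),(t_2,s_2)\in\mathbb{C}^\times\times\mathbb{C}^\times$ with $t_1\ne t_2$ and $s_1\neq s_2$, let $X_1=A_2(t_1,s_1)$, $X_2=A_2(t_2,s_2)$, let $\varepsilon_0=\det(X_1)+\det(X_2)-\det(X_1+X_2)$, and for $k\in\mathbb{N}$ let $\mathfrak{X}_k=(X_1X_2)^k+(X_2X_1)^k$. Then $\mathfrak{X}_1=\varepsilon_0 I_2$, $\mathfrak{X}_2=(\varepsilon_0^2-2)I_2$, and $\mathfrak{X}_n=\varepsilon_0\mathfrak{X}_{n-1}-\mathfrak{X}_{n-2}$ for all $n\ge3$.
   Context: $\mathbb{C}^\times=\mathbb{C}\setminus\{0\}$; $A_2(t,s)=\begin{pmatrix} t & s\\ \frac{1-t^2}{s} & -t\end{pmatrix}$; $I_2$ is the $2\times 2$ identity matrix. *)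

theory Defs
  imports "HOL-Analysis.Analysis"
begin


definition A2 :: "complex \<Rightarrow> complex \<Rightarrow> complex^2^2" where
  "A2 t s = vector [vector [t, s], vector [(1 - t^2) / s, - t]]"

abbreviation I2 :: "complex^2^2" where
  "I2 \<equiv> mat 1"

text \<open>Matrix power with respect to matrix multiplication (note: the operator
  \<open>^\<close> on \<open>'a^'n^'m\<close> is the componentwise power, not the matrix power).\<close>
primrec matpow :: "'a::semiring_1^'n^'n \<Rightarrow> nat \<Rightarrow> 'a^'n^'n" where
  "matpow M 0 = mat 1"
| "matpow M (Suc k) = M ** matpow M k"

end

theory Submission
  imports Defs
begin

text \<open>Both \<open>X1\<close> and \<open>X2\<close> are traceless with determinant \<open>-1\<close>, so by Cayley--Hamilton
  they are involutions, and \<open>P = X1 X2\<close>, \<open>Q = X2 X1\<close> are mutually inverse. Polarizing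
  Cayley--Hamilton for traceless \<open>2 \<times> 2\<close> matrices gives \<open>P + Q = \<epsilon>\<^sub>0 I\<close>, and expanding
  \<open>(P + Q)(P\<^sup>k + Q\<^sup>k) = P\<^sup>k\<^sup>+\<^sup>1 + Q\<^sup>k\<^sup>+\<^sup>1 + P\<^sup>k\<^sup>-\<^sup>1 + Q\<^sup>k\<^sup>-\<^sup>1\<close> yields the recurrence.\<close>

lemma matrix_add_rdistrib:
  "((A::'a::semiring_1^'n^'m) + B) ** (C::'a^'p^'n) = A ** C + B ** C"
  by (simp add: matrix_matrix_mult_def vec_eq_iff distrib_right sum.distrib)

lemma mat_mult_mat: "mat a ** mat b = (mat (a * b) :: 'a::semiring_1^'n^'n)"
  unfolding matrix_matrix_mult_def mat_def
  by (auto simp: vec_eq_iff if_distrib[where f = "\<lambda>x. x * c" for c] cong: if_cong)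

lemma matpow_add_matpow_recurrence:
  fixes P Q :: "'a::ring_1^'n^'n"
  assumes "P ** Q = mat 1" and "Q ** P = mat 1" and "P + Q = mat e"
  shows "matpow P (Suc (Suc m)) + matpow Q (Suc (Suc m)) =
    mat e ** (matpow P (Suc m) + matpow Q (Suc m)) - (matpow P m + matpow Q m)"
proof -
  have "P ** matpow Q (Suc m) = matpow Q m" and "Q ** matpow P (Suc m) = matpow P m"
    using assms(1,2) by (simp_all add: matrix_mul_assoc)
  then have "(P + Q) ** (matpow P (Suc m) + matpow Q (Suc m)) =
      matpow P (Suc (Suc m)) + matpow Q (Suc (Suc m)) + (matpow P m + matpow Q m)"
    by (simp add: matrix_add_ldistrib matrix_add_rdistrib)
  then show ?thesis
    using assms(3) by simp
qed

lemma traceless_2x2_entry: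
  fixes A :: "'a::comm_ring_1^2^2"
  shows "trace A = 0 \<Longrightarrow> A$2$2 = - A$1$1"
  by (simp add: trace_def sum_2 eq_neg_iff_add_eq_0 add.commute)

lemma traceless_2x2_mult_self:
  fixes A :: "'a::comm_ring_1^2^2"
  assumes "trace A = 0"
  shows "A ** A = mat (- det A)"
  using traceless_2x2_entry[OF assms]
  by (simp add: vec_eq_iff forall_2 matrix_matrix_mult_def sum_2 mat_def det_2 algebra_simps)

lemma traceless_2x2_anticommutator:
  fixes A B :: "'a::comm_ring_1^2^2"
  assumes "trace A = 0" and "trace B = 0"
  shows "A ** B + B ** A = mat (det A + det B - det (A + B))"
  using traceless_2x2_entry[OF assms(1)] traceless_2x2_entry[OF assms(2)]
  by (simp add: vec_eq_iff forall_2 matrix_matrix_mult_def sum_2 mat_def det_2 algebra_simps)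

lemma trace_A2: "trace (A2 t s) = 0"
  by (simp add: A2_def trace_def sum_2)

lemma det_A2: "s \<noteq> 0 \<Longrightarrow> det (A2 t s) = -1"
  by (simp add: A2_def det_2 field_simps power2_eq_square)

lemma A2_mult_self: "s \<noteq> 0 \<Longrightarrow> A2 t s ** A2 t s = mat 1"
  by (simp add: traceless_2x2_mult_self trace_A2 det_A2)

theorem mainTheorem8:
  fixes t1 s1 t2 s2 :: complex
  assumes "t1 \<noteq> 0" "s1 \<noteq> 0" "t2 \<noteq> 0" "s2 \<noteq> 0"
    and "t1 \<noteq> t2" "s1 \<noteq> s2"
  defines "X1 \<equiv> A2 t1 s1" and "X2 \<equiv> A2 t2 s2"
  defines "eps0 \<equiv> det X1 + det X2 - det (X1 + X2)"
  defines "XX \<equiv> (\<lambda>k::nat. matpow (X1 ** X2) k + matpow (X2 ** X1) k)"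
  shows "XX 1 = mat eps0 \<and> XX 2 = mat (eps0^2 - 2) \<and>
    (\<forall>n\<ge>3. XX n = mat eps0 ** XX (n - 1) - XX (n - 2))"
proof -
  have "X1 ** X1 = mat 1" "X2 ** X2 = mat 1"
    using assms(2,4) by (simp_all add: X1_def X2_def A2_mult_self)
  then have inverse: "(X1 ** X2) ** (X2 ** X1) = mat 1" "(X2 ** X1) ** (X1 ** X2) = mat 1"
    by (metis matrix_mul_assoc matrix_mul_lid)+
  have sum: "X1 ** X2 + X2 ** X1 = mat eps0"
    unfolding X1_def X2_def eps0_def by (simp add: traceless_2x2_anticommutator trace_A2)
  have rec: "XX (Suc (Suc m)) = mat eps0 ** XX (Suc m) - XX m" for m
    unfolding XX_def by (rule matpow_add_matpow_recurrence[OF inverse sum])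
  have XX1: "XX 1 = mat eps0"
    using sum by (simp add: XX_def)
  have XX0: "XX 0 = mat 2"
    by (simp add: XX_def mat_def vec_eq_iff)
  have "XX 2 = mat eps0 ** mat eps0 - mat 2"
    using rec[of 0] XX0 XX1 by (simp add: numeral_2_eq_2)
  also have "\<dots> = mat (eps0^2 - 2)"
    unfolding mat_mult_mat by (simp add: power2_eq_square mat_def vec_eq_iff)
  finally have XX2: "XX 2 = mat (eps0^2 - 2)" .
  have "XX n = mat eps0 ** XX (n - 1) - XX (n - 2)" if "n \<ge> 3" for n
    using rec[of "n - 2"] that by (simp add: Suc_diff_Suc numeral_2_eq_2)
  with XX1 XX2 show ?thesis
    by blast
qed

end
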